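(* Given $n$ variables $\mathcal{X}=\{x_1,\dots,x_n\}$ and a set $V=\{v_1,\dots,v_m\}$ of pessimistic voters (each with preferences $p_{v_j}:\mathcal{X}\to[-1,1]$), one can construct, in time $O(n\cdot m)$, an optimal theory, i.e., a consistent theory $T$ over $\mathcal{X}$ maximizing $\sum_{v\in V}ut_v(T)$ over all consistent theories.
   Context: A theory is a finite set of propositional formulas over $\mathcal{X}$. Worlds are assignments $\omega:\mathcal{X}\to\{-1,1\}$ ($1$ = true, $-1$ = false); $\omega\models T$ means $\omega$ satisfies every formula of $T$. A voter $v$ has utility for a world $u_v(\omega)=\sum_{x_i\in\mathcal{X}}p_v(x_i)\,\omega(x_i)$. A pessimistic voter's utility for a theory is $ut_v(T)=\min\{u_v(\omega):\omega\models T\}$. Arithmetic operations are counted as unit cost. *)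

theory Defs
  imports "HOL-Library.FuncSet" Complex_Main
begin

text \<open>Propositional formulas over variables x_0, ..., x_{n-1} (index i stands for x_{i+1}).\<close>
datatype form = FVar nat | FTrue | FFalse | FNot form | FAnd form form | FOr form form | FImp form form

fun vars :: "form \<Rightarrow> nat set" where
  "vars (FVar i) = {i}"
| "vars FTrue = {}"
| "vars FFalse = {}"
| "vars (FNot a) = vars a"
| "vars (FAnd a b) = vars a \<union> vars b"
| "vars (FOr a b) = vars a \<union> vars b"
| "vars (FImp a b) = vars a \<union> vars b"

definition worlds :: "nat \<Rightarrow> (nat \<Rightarrow> int) set" where
  "worlds n = PiE {..<n} (\<lambda>_. {-1, 1})"

fun sat :: "(nat \<Rightarrow> int) \<Rightarrow> form \<Rightarrow> bool" where
  "sat w (FVar i) = (w i = 1)"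
| "sat w FTrue = True"
| "sat w FFalse = False"
| "sat w (FNot a) = (\<not> sat w a)"
| "sat w (FAnd a b) = (sat w a \<and> sat w b)"
| "sat w (FOr a b) = (sat w a \<or> sat w b)"
| "sat w (FImp a b) = (sat w a \<longrightarrow> sat w b)"

definition models :: "(nat \<Rightarrow> int) \<Rightarrow> form set \<Rightarrow> bool" where
  "models w T = (\<forall>\<phi>\<in>T. sat w \<phi>)"

definition is_theory :: "nat \<Rightarrow> form set \<Rightarrow> bool" where
  "is_theory n T = (finite T \<and> (\<forall>\<phi>\<in>T. vars \<phi> \<subseteq> {..<n}))"

definition consistent :: "nat \<Rightarrow> form set \<Rightarrow> bool" where
  "consistent n T = (\<exists>w\<in>worlds n. models w T)"

text \<open>Voter j (j < m) has preference p j i for variable i.\<close>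
definition u_world :: "nat \<Rightarrow> (nat \<Rightarrow> nat \<Rightarrow> real) \<Rightarrow> nat \<Rightarrow> (nat \<Rightarrow> int) \<Rightarrow> real" where
  "u_world n p j w = (\<Sum>i<n. p j i * real_of_int (w i))"

definition ut :: "nat \<Rightarrow> (nat \<Rightarrow> nat \<Rightarrow> real) \<Rightarrow> nat \<Rightarrow> form set \<Rightarrow> real" where
  "ut n p j T = Min {u_world n p j w | w. w \<in> worlds n \<and> models w T}"

definition welfare :: "nat \<Rightarrow> nat \<Rightarrow> (nat \<Rightarrow> nat \<Rightarrow> real) \<Rightarrow> form set \<Rightarrow> real" where
  "welfare n m p T = (\<Sum>j<m. ut n p j T)"

definition optimal_theory :: "nat \<Rightarrow> nat \<Rightarrow> (nat \<Rightarrow> nat \<Rightarrow> real) \<Rightarrow> form set \<Rightarrow> bool" where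
  "optimal_theory n m p T = (is_theory n T \<and> consistent n T \<and>
     (\<forall>T'. is_theory n T' \<and> consistent n T' \<longrightarrow> welfare n m p T' \<le> welfare n m p T))"

text \<open>The construction, with explicit step counting (unit cost per arithmetic
  operation / comparison). Each function returns (result, number of steps).\<close>
fun col_sum :: "(nat \<Rightarrow> nat \<Rightarrow> real) \<Rightarrow> nat \<Rightarrow> nat \<Rightarrow> real \<times> nat" where
  "col_sum p i 0 = (0, 0)"
| "col_sum p i (Suc j) = (case col_sum p i j of (s, c) \<Rightarrow> (s + p j i, c + 1))"

fun build :: "(nat \<Rightarrow> nat \<Rightarrow> real) \<Rightarrow> nat \<Rightarrow> nat \<Rightarrow> form list \<times> nat" where
  "build p m 0 = ([], 0)"
| "build p m (Suc i) =
     (case build p m i of (L, c) \<Rightarrow>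
       (case col_sum p i m of (s, c') \<Rightarrow>
          ((if 0 \<le> s then FVar i else FNot (FVar i)) # L, c + c' + 1)))"

end

theory Submission
  imports Defs
begin

text \<open>A pessimistic voter values a consistent theory at most as much as any of its models, so the
  welfare of a theory is bounded by the total utility \<open>\<Sum>i. s i * w i\<close> of any of its models,
  where \<open>s i\<close> is the total preference of the electorate for variable \<open>i\<close>. This bound is maximised
  coordinatewise by the world \<open>w i = sign (s i)\<close>, and the theory consisting of the corresponding
  literals has that world as its only model, so it attains the bound. The construction computes
  each \<open>s i\<close> with \<open>m\<close> additions and then compares it with \<open>0\<close>, i.e. \<open>n * (m + 1)\<close> steps.\<close>

definition pref_sum :: "(nat \<Rightarrow> nat \<Rightarrow> real) \<Rightarrow> nat \<Rightarrow> nat \<Rightarrow> real" where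
  "pref_sum p m i = (\<Sum>j<m. p j i)"

definition majority_lit :: "(nat \<Rightarrow> nat \<Rightarrow> real) \<Rightarrow> nat \<Rightarrow> nat \<Rightarrow> form" where
  "majority_lit p m i = (if 0 \<le> pref_sum p m i then FVar i else FNot (FVar i))"

definition majority_world :: "(nat \<Rightarrow> nat \<Rightarrow> real) \<Rightarrow> nat \<Rightarrow> nat \<Rightarrow> nat \<Rightarrow> int" where
  "majority_world p m n = restrict (\<lambda>i. if 0 \<le> pref_sum p m i then 1 else -1) {..<n}"

lemma col_sum_eq: "col_sum p i m = (pref_sum p m i, m)"
  by (induction m) (auto simp: pref_sum_def)

lemma build_eq: "build p m n = (map (majority_lit p m) (rev [0..<n]), n * (m + 1))"
  by (induction n) (auto simp: col_sum_eq majority_lit_def)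

lemma set_fst_build: "set (fst (build p m n)) = majority_lit p m ` {..<n}"
  by (auto simp: build_eq)

lemma snd_build: "snd (build p m n) = n * (m + 1)"
  by (simp add: build_eq)

lemma finite_worlds: "finite (worlds n)"
  by (simp add: worlds_def finite_PiE)

lemma world_value: "w \<in> worlds n \<Longrightarrow> i < n \<Longrightarrow> w i = 1 \<or> w i = -1"
  by (auto simp: worlds_def PiE_def)

lemma world_undefined: "w \<in> worlds n \<Longrightarrow> \<not> i < n \<Longrightarrow> w i = undefined"
  by (auto simp: worlds_def PiE_def extensional_def)

lemma majority_world_in_worlds: "majority_world p m n \<in> worlds n"
  by (simp add: worlds_def majority_world_def)

lemma models_majority_lits_iff:
  assumes "w \<in> worlds n"
  shows "models w (majority_lit p m ` {..<n}) \<longleftrightarrow> w = majority_world p m n"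
proof
  assume models: "models w (majority_lit p m ` {..<n})"
  show "w = majority_world p m n"
  proof
    fix i
    show "w i = majority_world p m n i"
    proof (cases "i < n")
      case True
      then have "sat w (majority_lit p m i)"
        using models by (simp add: models_def)
      with True world_value[OF assms] show ?thesis
        by (auto simp: majority_lit_def majority_world_def split: if_splits)
    qed (simp add: world_undefined[OF assms] majority_world_def)
  qed
qed (auto simp: models_def majority_lit_def majority_world_def)

lemma ut_le_u_world:
  assumes "w \<in> worlds n" "models w T"
  shows "ut n p j T \<le> u_world n p j w"
  unfolding ut_def using assms finite_worlds[of n]
  by (intro Min_le) (auto simp: setcompr_eq_image)

lemma ut_unique_model:
  assumes "\<And>w. w \<in> worlds n \<Longrightarrow> models w T \<longleftrightarrow> w = w\<^sub>0" "w\<^sub>0 \<in> worlds n"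
  shows "ut n p j T = u_world n p j w\<^sub>0"
proof -
  have "{u_world n p j w | w. w \<in> worlds n \<and> models w T} = {u_world n p j w\<^sub>0}"
    using assms by auto
  then show ?thesis by (simp add: ut_def)
qed

lemma welfare_le_total_utility:
  assumes "w \<in> worlds n" "models w T"
  shows "welfare n m p T \<le> (\<Sum>j<m. u_world n p j w)"
  unfolding welfare_def by (intro sum_mono ut_le_u_world[OF assms])

lemma total_utility_eq: "(\<Sum>j<m. u_world n p j w) = (\<Sum>i<n. pref_sum p m i * of_int (w i))"
  unfolding u_world_def pref_sum_def sum_distrib_right by (rule sum.swap)

lemma total_utility_le_majority_world:
  assumes "w \<in> worlds n"
  shows "(\<Sum>j<m. u_world n p j w) \<le> (\<Sum>j<m. u_world n p j (majority_world p m n))"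
  unfolding total_utility_eq
proof (rule sum_mono)
  fix i assume "i \<in> {..<n}"
  with world_value[OF assms, of i]
  show "pref_sum p m i * of_int (w i) \<le> pref_sum p m i * of_int (majority_world p m n i)"
    by (auto simp: majority_world_def)
qed

lemma optimal_majority_lits: "optimal_theory n m p (majority_lit p m ` {..<n})"
  unfolding optimal_theory_def
proof (intro conjI allI impI)
  show "is_theory n (majority_lit p m ` {..<n})"
    by (auto simp: is_theory_def majority_lit_def)
  show "consistent n (majority_lit p m ` {..<n})"
    using majority_world_in_worlds models_majority_lits_iff by (auto simp: consistent_def)
  fix T assume "is_theory n T \<and> consistent n T"
  then obtain w where w: "w \<in> worlds n" "models w T"
    by (auto simp: consistent_def)
  have "welfare n m p T \<le> (\<Sum>j<m. u_world n p j w)"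
    by (rule welfare_le_total_utility[OF w])
  also have "\<dots> \<le> (\<Sum>j<m. u_world n p j (majority_world p m n))"
    by (rule total_utility_le_majority_world[OF w(1)])
  also have "\<dots> = welfare n m p (majority_lit p m ` {..<n})"
    unfolding welfare_def
    using ut_unique_model[OF models_majority_lits_iff majority_world_in_worlds] by simp
  finally show "welfare n m p T \<le> welfare n m p (majority_lit p m ` {..<n})" .
qed

theorem theorem9:
  "\<exists>C::nat. \<forall>n m (p :: nat \<Rightarrow> nat \<Rightarrow> real).
     (\<forall>j<m. \<forall>i<n. -1 \<le> p j i \<and> p j i \<le> 1) \<and> 1 \<le> n \<and> 1 \<le> m \<longrightarrow>
       optimal_theory n m p (set (fst (build p m n))) \<and> snd (build p m n) \<le> C * n * m"
proof (intro exI[of _ 2] allI impI conjI)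
  fix n m :: nat and p :: "nat \<Rightarrow> nat \<Rightarrow> real"
  assume "(\<forall>j<m. \<forall>i<n. -1 \<le> p j i \<and> p j i \<le> 1) \<and> 1 \<le> n \<and> 1 \<le> m"
  then have "m + 1 \<le> 2 * m" by simp
  then show "snd (build p m n) \<le> 2 * n * m"
    unfolding snd_build by (metis mult.assoc mult.commute mult_le_mono2)
  show "optimal_theory n m p (set (fst (build p m n)))"
    unfolding set_fst_build by (rule optimal_majority_lits)
qed

end
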